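(* Let $\Gamma$ be an elliptic graph with NN-elliptic sequence $\{B_j\}$ and cycles $C_j$, and let $\ell\in Supp_j(P_0)$ for some $-1\le j\le m-1$. Write $Z_K-E-\ell=C_j+\sum_{v\in\mathcal V(\Gamma)\setminus\mathcal V(B_{j+1})}m_vE_v$ with $m_v\in\mathbb Z_{\ge 0}$. If $m_v\ne0$, then $v$ is not adjacent to any vertex of $B_{j+1}$.
   Context: Let $\Gamma$ be a finite connected tree with vertex set $\mathcal V$, each vertex $v$ decorated by an integer $e_v$ (genera zero). $L=\mathbb Z\langle E_v\rangle$ with form $(E_v,E_v)=e_v$, $(E_v,E_w)=1$ for adjacent $v\ne w$, $0$ otherwise, assumed negative definite; $L'$ the dual lattice $\{l'\in L\otimes\mathbb Q:(l',L)\subset\mathbb Z\}$, $[l']$ the class in $L'/L$; $E_v^*$ with $(E_v^*,E_w)=-\delta_{vw}$; $\delta_v$ valency; $E=\sum E_v$; $\ge$ coordinatewise, $\prec$ strict in all coordinates, $l>0$ if $l\ge0,l\ne0$; $|l'|$ the support. $Z_K$ with $(Z_K,E_v)=e_v+2$; $\chi(l')=-(l',l'-Z_K)/2$. $\mathcal S'=\{l':(l',E_v)\le0\ \forall v\}$, $s_h=\min\{l'\in\mathcal S':[l']=h\}$; $Z_{min}(B)$ the minimal nonzero element of $\mathcal S'(B)\cap L(B)$ for a connected full subgraph $B$. $Z(\mathbf t)=\sum z(l')\mathbf t^{l'}$ the Taylor expansion at $0$ of $\prod_v(1-\mathbf t^{E_v^*})^{\delta_v-2}$; $P_0(\mathbf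 t)=\sum_{\ell\in L,\ell\not\prec0}w(\ell)\mathbf t^\ell$, $w(\ell)=z(Z_K-E-\ell)$, $Supp(P_0)=\{\ell\not\prec0:w(\ell)\ne0\}$. Elliptic graph: $e_v\le-2$ for all $v$, $\min_{l\in L,l>0}\chi(l)=0$. NN-elliptic sequence: $B_{-1}=\Gamma$, $Z_{B_{-1}}=s_{[Z_K]}$, $B_0=|Z_K-s_{[Z_K]}|$; for $j\ge0$, $Z_{B_j}=Z_{min}(B_j)$, and if $Z_K-\sum_{i=-1}^jZ_{B_i}\ne0$ then $B_{j+1}=|Z_K-\sum_{i=-1}^jZ_{B_i}|$; $m$ is the index with $Z_K=\sum_{i=-1}^mZ_{B_i}$; $C_j=\sum_{i=-1}^jZ_{B_i}$. For $\ell\in Supp(P_0)$ with $\mathcal V^{<0}(\ell)=\{v:\ell_v<0\}$, the associated cycle is the unique $l'$ with $\ell=Z_K-E-l'-\sum_{v\in\mathcal V^{<0}(\ell)}m_vE_v$, $l'\le Z_K$, $l'_v=(Z_K)_v$ on $\mathcal V^{<0}(\ell)$, $m_v\in\mathbb Z_{\ge0}$; $Supp_j(P_0)$ is the set of $\ell$ with associated cycle $C_j$ (for such $\ell$ it is known that $\mathcal V^{<0}(\ell)=\mathcal V\setminus\mathcal V(B_{j+1})$). *)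

theory Defs
  imports Complex_Main "HOL-Library.Function_Algebras"
begin

text \<open>Plumbing graph: finite vertex set V, adjacency adj, decorations e.
  Rational vectors (elements of L tensor Q) are functions 'v => rat vanishing off V.\<close>

definition is_tree :: "'v set \<Rightarrow> ('v \<Rightarrow> 'v \<Rightarrow> bool) \<Rightarrow> bool" where
  "is_tree V adj \<longleftrightarrow> finite V \<and> V \<noteq> {}
     \<and> (\<forall>u w. adj u w \<longrightarrow> u \<in> V \<and> w \<in> V \<and> u \<noteq> w \<and> adj w u)
     \<and> (\<forall>u\<in>V. \<forall>w\<in>V. adj\<^sup>*\<^sup>* u w)
     \<and> card {{u, w} | u w. adj u w} = card V - 1"

definition Ev :: "'v \<Rightarrow> 'v \<Rightarrow> rat" where
  "Ev v = (\<lambda>w. if w = v then 1 else 0)"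

definition Eall :: "'v set \<Rightarrow> 'v \<Rightarrow> rat" where
  "Eall V = (\<lambda>w. if w \<in> V then 1 else 0)"

definition valency :: "'v set \<Rightarrow> ('v \<Rightarrow> 'v \<Rightarrow> bool) \<Rightarrow> 'v \<Rightarrow> nat" where
  "valency V adj v = card {w \<in> V. adj v w}"

definition imat :: "('v \<Rightarrow> 'v \<Rightarrow> bool) \<Rightarrow> ('v \<Rightarrow> int) \<Rightarrow> 'v \<Rightarrow> 'v \<Rightarrow> rat" where
  "imat adj e v w = (if v = w then of_int (e v) else if adj v w then 1 else 0)"

definition form :: "'v set \<Rightarrow> ('v \<Rightarrow> 'v \<Rightarrow> bool) \<Rightarrow> ('v \<Rightarrow> int) \<Rightarrow> ('v \<Rightarrow> rat) \<Rightarrow> ('v \<Rightarrow> rat) \<Rightarrow> rat" where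
  "form V adj e x y = (\<Sum>v\<in>V. \<Sum>w\<in>V. x v * y w * imat adj e v w)"

definition supported :: "'v set \<Rightarrow> ('v \<Rightarrow> rat) \<Rightarrow> bool" where
  "supported V x \<longleftrightarrow> (\<forall>v. v \<notin> V \<longrightarrow> x v = 0)"

definition latL :: "'v set \<Rightarrow> ('v \<Rightarrow> rat) set" where
  "latL V = {x. supported V x \<and> (\<forall>v. x v \<in> \<int>)}"

definition neg_definite :: "'v set \<Rightarrow> ('v \<Rightarrow> 'v \<Rightarrow> bool) \<Rightarrow> ('v \<Rightarrow> int) \<Rightarrow> bool" where
  "neg_definite V adj e \<longleftrightarrow> (\<forall>x. supported V x \<and> x \<noteq> 0 \<longrightarrow> form V adj e x x < 0)"

definition latLdual :: "'v set \<Rightarrow> ('v \<Rightarrow> 'v \<Rightarrow> bool) \<Rightarrow> ('v \<Rightarrow> int) \<Rightarrow> ('v \<Rightarrow> rat) set" where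
  "latLdual V adj e = {x. supported V x \<and> (\<forall>l\<in>latL V. form V adj e x l \<in> \<int>)}"

definition Estar :: "'v set \<Rightarrow> ('v \<Rightarrow> 'v \<Rightarrow> bool) \<Rightarrow> ('v \<Rightarrow> int) \<Rightarrow> 'v \<Rightarrow> 'v \<Rightarrow> rat" where
  "Estar V adj e v = (THE x. supported V x \<and>
      (\<forall>w\<in>V. form V adj e x (Ev w) = (if v = w then -1 else 0)))"

definition ZK :: "'v set \<Rightarrow> ('v \<Rightarrow> 'v \<Rightarrow> bool) \<Rightarrow> ('v \<Rightarrow> int) \<Rightarrow> 'v \<Rightarrow> rat" where
  "ZK V adj e = (THE x. supported V x \<and> (\<forall>v\<in>V. form V adj e x (Ev v) = of_int (e v) + 2))"

definition chi :: "'v set \<Rightarrow> ('v \<Rightarrow> 'v \<Rightarrow> bool) \<Rightarrow> ('v \<Rightarrow> int) \<Rightarrow> ('v \<Rightarrow> rat) \<Rightarrow> rat" where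
  "chi V adj e l = - form V adj e l (l - ZK V adj e) / 2"

definition Sdual :: "'v set \<Rightarrow> ('v \<Rightarrow> 'v \<Rightarrow> bool) \<Rightarrow> ('v \<Rightarrow> int) \<Rightarrow> ('v \<Rightarrow> rat) set" where
  "Sdual V adj e = {x \<in> latLdual V adj e. \<forall>v\<in>V. form V adj e x (Ev v) \<le> 0}"

definition s_cls :: "'v set \<Rightarrow> ('v \<Rightarrow> 'v \<Rightarrow> bool) \<Rightarrow> ('v \<Rightarrow> int) \<Rightarrow> ('v \<Rightarrow> rat) \<Rightarrow> 'v \<Rightarrow> rat" where
  "s_cls V adj e x = (THE s. s \<in> Sdual V adj e \<and> s - x \<in> latL V \<and>
      (\<forall>y\<in>Sdual V adj e. y - x \<in> latL V \<longrightarrow> s \<le> y))"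

definition Zmin :: "'v set \<Rightarrow> ('v \<Rightarrow> 'v \<Rightarrow> bool) \<Rightarrow> ('v \<Rightarrow> int) \<Rightarrow> 'v set \<Rightarrow> 'v \<Rightarrow> rat" where
  "Zmin V adj e B = (THE z. z \<in> latL B \<and> z \<noteq> 0 \<and> (\<forall>v\<in>B. form V adj e z (Ev v) \<le> 0) \<and>
      (\<forall>y. y \<in> latL B \<and> y \<noteq> 0 \<and> (\<forall>v\<in>B. form V adj e y (Ev v) \<le> 0) \<longrightarrow> z \<le> y))"

definition supp :: "'v set \<Rightarrow> ('v \<Rightarrow> rat) \<Rightarrow> 'v set" where
  "supp V x = {v \<in> V. x v \<noteq> 0}"

definition elliptic :: "'v set \<Rightarrow> ('v \<Rightarrow> 'v \<Rightarrow> bool) \<Rightarrow> ('v \<Rightarrow> int) \<Rightarrow> bool" where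
  "elliptic V adj e \<longleftrightarrow> (\<forall>v\<in>V. e v \<le> -2) \<and>
     (\<forall>l\<in>latL V. l > 0 \<longrightarrow> chi V adj e l \<ge> 0) \<and>
     (\<exists>l\<in>latL V. l > 0 \<and> chi V adj e l = 0)"

text \<open>NN-elliptic sequence, shifted index: nnC k = C_{k-1}.\<close>
fun nnC :: "'v set \<Rightarrow> ('v \<Rightarrow> 'v \<Rightarrow> bool) \<Rightarrow> ('v \<Rightarrow> int) \<Rightarrow> nat \<Rightarrow> 'v \<Rightarrow> rat" where
  "nnC V adj e 0 = s_cls V adj e (ZK V adj e)"
| "nnC V adj e (Suc k) = nnC V adj e k + Zmin V adj e (supp V (ZK V adj e - nnC V adj e k))"

definition NN_C :: "'v set \<Rightarrow> ('v \<Rightarrow> 'v \<Rightarrow> bool) \<Rightarrow> ('v \<Rightarrow> int) \<Rightarrow> int \<Rightarrow> 'v \<Rightarrow> rat" where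
  "NN_C V adj e j = nnC V adj e (nat (j + 1))"

definition NN_B :: "'v set \<Rightarrow> ('v \<Rightarrow> 'v \<Rightarrow> bool) \<Rightarrow> ('v \<Rightarrow> int) \<Rightarrow> int \<Rightarrow> 'v set" where
  "NN_B V adj e j = (if j = -1 then V else supp V (ZK V adj e - NN_C V adj e (j - 1)))"

text \<open>Coefficient z(l') of the Taylor expansion of prod_v (1 - t^{E_v^*})^{delta_v - 2}.\<close>
definition zcoef :: "'v set \<Rightarrow> ('v \<Rightarrow> 'v \<Rightarrow> bool) \<Rightarrow> ('v \<Rightarrow> int) \<Rightarrow> ('v \<Rightarrow> rat) \<Rightarrow> rat" where
  "zcoef V adj e l =
     (\<Sum>n\<in>{n :: 'v \<Rightarrow> nat. (\<forall>v. v \<notin> V \<longrightarrow> n v = 0) \<and>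
             (\<lambda>w. \<Sum>v\<in>V. of_nat (n v) * Estar V adj e v w) = l}.
        \<Prod>v\<in>V. (-1) ^ (n v) * ((of_nat (valency V adj v) - 2) gchoose (n v)))"

definition wcoef :: "'v set \<Rightarrow> ('v \<Rightarrow> 'v \<Rightarrow> bool) \<Rightarrow> ('v \<Rightarrow> int) \<Rightarrow> ('v \<Rightarrow> rat) \<Rightarrow> rat" where
  "wcoef V adj e l = zcoef V adj e (ZK V adj e - Eall V - l)"

definition SuppP0 :: "'v set \<Rightarrow> ('v \<Rightarrow> 'v \<Rightarrow> bool) \<Rightarrow> ('v \<Rightarrow> int) \<Rightarrow> ('v \<Rightarrow> rat) set" where
  "SuppP0 V adj e = {l \<in> latL V. \<not> (\<forall>v\<in>V. l v < 0) \<and> wcoef V adj e l \<noteq> 0}"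

definition Vneg :: "'v set \<Rightarrow> ('v \<Rightarrow> rat) \<Rightarrow> 'v set" where
  "Vneg V l = {v \<in> V. l v < 0}"

definition assoc_cycle :: "'v set \<Rightarrow> ('v \<Rightarrow> 'v \<Rightarrow> bool) \<Rightarrow> ('v \<Rightarrow> int) \<Rightarrow> ('v \<Rightarrow> rat) \<Rightarrow> 'v \<Rightarrow> rat" where
  "assoc_cycle V adj e l = (THE l'. \<exists>mm :: 'v \<Rightarrow> int.
      (\<forall>v\<in>Vneg V l. mm v \<ge> 0) \<and>
      l = ZK V adj e - Eall V - l' - (\<lambda>w. if w \<in> Vneg V l then of_int (mm w) else 0) \<and>
      l' \<le> ZK V adj e \<and> (\<forall>v\<in>Vneg V l. l' v = ZK V adj e v))"

definition SuppP0_j :: "'v set \<Rightarrow> ('v \<Rightarrow> 'v \<Rightarrow> bool) \<Rightarrow> ('v \<Rightarrow> int) \<Rightarrow> int \<Rightarrow> ('v \<Rightarrow> rat) set" where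
  "SuppP0_j V adj e j = {l \<in> SuppP0 V adj e. assoc_cycle V adj e l = NN_C V adj e j}"

end

theory Submission
  imports Defs "Jordan_Normal_Form.Determinant"
begin

text \<open>Since \<open>z(Z\<^sub>K - E - \<ell>) \<noteq> 0\<close>, the cycle \<open>Z\<^sub>K - E - \<ell>\<close> is a nonnegative combination of the
  \<open>E\<^sub>v\<^sup>*\<close>, so it pairs nonpositively with every \<open>E\<^sub>w\<close>. Along the NN-elliptic sequence,
  \<open>Z\<^sub>K - C\<^sub>j \<ge> 0\<close> and \<open>(C\<^sub>j, E\<^sub>w) = 0\<close> for all \<open>w\<close> in \<open>B\<^sub>j\<^sub>+\<^sub>1 = |Z\<^sub>K - C\<^sub>j|\<close>: by induction on \<open>j\<close>,
  \<open>\<chi>(Z\<^sub>K - C) = (Z\<^sub>K - C, C)/2\<close> is a sum of nonpositive terms, while ellipticity gives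
  \<open>\<chi> \<ge> 0\<close> on positive cycles, so every term vanishes. (Ellipticity also makes supports of cycles
  with \<open>\<chi> \<le> 0\<close> connected, which is what makes \<open>Z\<^sub>m\<^sub>i\<^sub>n(B\<^sub>j)\<close> well defined.) Hence if \<open>m\<^sub>v > 0\<close>
  and \<open>v\<close> were adjacent to \<open>w \<in> B\<^sub>j\<^sub>+\<^sub>1\<close>, then
  \<open>(Z\<^sub>K - E - \<ell>, E\<^sub>w) = (\<Sum> m\<^sub>u E\<^sub>u, E\<^sub>w) \<ge> m\<^sub>v > 0\<close>, a contradiction.\<close>

lemma mat_vec_solvable_if_kernel_trivial:
  fixes A :: "'a :: field mat"
  assumes A: "A \<in> carrier_mat n n" and b: "b \<in> carrier_vec n"
    and ker: "\<And>X. X \<in> carrier_vec n \<Longrightarrow> A *\<^sub>v X = 0\<^sub>v n \<Longrightarrow> X = 0\<^sub>v n"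
  shows "\<exists>X \<in> carrier_vec n. A *\<^sub>v X = b"
proof -
  have "det A \<noteq> 0" using det_0_iff_vec_prod_zero[OF A] ker by blast
  then have "A \<in> Units (ring_mat TYPE('a) n n)" by (rule det_non_zero_imp_unit[OF A])
  then obtain B where B: "B \<in> carrier_mat n n" "A * B = 1\<^sub>m n"
    unfolding Units_def ring_mat_def by auto
  have "A *\<^sub>v (B *\<^sub>v b) = b"
    using A B b by (simp add: assoc_mult_mat_vec[symmetric, of A n n B n b])
  then show ?thesis using B b by (intro bexI[of _ "B *\<^sub>v b"]) auto
qed

lemma linear_system_solvable_if_kernel_trivial:
  fixes M :: "'v \<Rightarrow> 'v \<Rightarrow> 'a :: field" and b :: "'v \<Rightarrow> 'a"
  assumes fin: "finite V"
    and ker: "\<And>x. \<forall>v. v \<notin> V \<longrightarrow> x v = 0 \<Longrightarrow> \<forall>w\<in>V. (\<Sum>v\<in>V. x v * M v w) = 0 \<Longrightarrow> x = 0"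
  shows "\<exists>x. (\<forall>v. v \<notin> V \<longrightarrow> x v = 0) \<and> (\<forall>w\<in>V. (\<Sum>v\<in>V. x v * M v w) = b w)"
proof -
  define n where "n = card V"
  obtain h where h: "bij_betw h {..<n} V"
    using ex_bij_betw_nat_finite[OF fin] unfolding n_def atLeast0LessThan by blast
  define hi where "hi = the_inv_into {..<n} h"
  have hi: "hi v < n" "h (hi v) = v" if "v \<in> V" for v
    using that h unfolding hi_def bij_betw_def by (auto simp: the_inv_into_f_f)
  have hi_h: "hi (h i) = i" if "i < n" for i
    using that h unfolding hi_def bij_betw_def by (simp add: the_inv_into_f_f)
  have hV: "h i \<in> V" if "i < n" for i using that h unfolding bij_betw_def by auto
  define A where "A = mat n n (\<lambda>(i, j). M (h j) (h i))"
  define fun_of :: "'a vec \<Rightarrow> 'v \<Rightarrow> 'a" where "fun_of X v = (if v \<in> V then X $ hi v else 0)" for X v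
  have A: "A \<in> carrier_mat n n" unfolding A_def by simp
  have sum_fun_of: "(\<Sum>v\<in>V. fun_of X v * M v w) = (A *\<^sub>v X) $ hi w"
    if "X \<in> carrier_vec n" "w \<in> V" for X w
  proof -
    have "(\<Sum>v\<in>V. fun_of X v * M v w) = (\<Sum>i<n. fun_of X (h i) * M (h i) w)"
      using sum.reindex_bij_betw[OF h, of "\<lambda>v. fun_of X v * M v w"] by simp
    also have "\<dots> = (\<Sum>i<n. X $ i * M (h i) (h (hi w)))"
      using hV hi_h hi(2)[OF \<open>w \<in> V\<close>] unfolding fun_of_def by simp
    also have "\<dots> = (A *\<^sub>v X) $ hi w"
      using that hi(1) unfolding A_def
      by (simp add: mult_mat_vec_def scalar_prod_def atLeast0LessThan mult.commute)
    finally show ?thesis .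
  qed
  have "\<exists>X \<in> carrier_vec n. A *\<^sub>v X = vec n (\<lambda>i. b (h i))"
  proof (rule mat_vec_solvable_if_kernel_trivial[OF A])
    fix X :: "'a vec" assume X: "X \<in> carrier_vec n" "A *\<^sub>v X = 0\<^sub>v n"
    have "fun_of X = 0"
      using ker[of "fun_of X"] sum_fun_of[OF X(1)] X(2) hi(1) by (simp add: fun_of_def)
    then have "X $ i = 0" if "i < n" for i
      using fun_cong[of "fun_of X" 0 "h i"] that hV hi_h unfolding fun_of_def by simp
    then show "X = 0\<^sub>v n" using X(1) by (intro eq_vecI) auto
  qed simp
  then obtain X where "X \<in> carrier_vec n" "A *\<^sub>v X = vec n (\<lambda>i. b (h i))" by blast
  then show ?thesis
    using sum_fun_of hi by (intro exI[of _ "fun_of X"]) (simp add: fun_of_def)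
qed

lemma finite_shifted_integral_box:
  fixes c a b :: "'v \<Rightarrow> rat"
  assumes "finite V"
  shows "finite {y. supported V y \<and> (\<forall>v. y v - c v \<in> \<int>) \<and> a \<le> y \<and> y \<le> b}"
proof -
  define W where "W = (\<Union>v\<in>V. (\<lambda>k. of_int k + c v) ` {\<lceil>a v - c v\<rceil>..\<lfloor>b v - c v\<rfloor>})"
  have "y v \<in> W" if y: "\<forall>v. y v - c v \<in> \<int>" "a \<le> y" "y \<le> b" and v: "v \<in> V" for y v
  proof -
    obtain k where k: "y v - c v = of_int k" using y(1) Ints_cases by blast
    have "a v \<le> y v" "y v \<le> b v" using y(2,3) unfolding le_fun_def by auto
    then have "k \<in> {\<lceil>a v - c v\<rceil>..\<lfloor>b v - c v\<rfloor>}" using k by (simp add: ceiling_le le_floor_iff)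
    then show ?thesis unfolding W_def using k v by (intro UN_I image_eqI[of _ _ k]) auto
  qed
  then have "{y. supported V y \<and> (\<forall>v. y v - c v \<in> \<int>) \<and> a \<le> y \<and> y \<le> b}
      \<subseteq> {y. \<forall>v. (v \<in> V \<longrightarrow> y v \<in> W) \<and> (v \<notin> V \<longrightarrow> y v = 0)}"
    unfolding supported_def by blast
  moreover have "finite {y. \<forall>v. (v \<in> V \<longrightarrow> y v \<in> W) \<and> (v \<notin> V \<longrightarrow> y v = 0)}"
    using assms unfolding W_def by (intro finite_set_of_finite_funs) auto
  ultimately show ?thesis by (rule finite_subset)
qed

lemma least_element_if_inf_closed:
  fixes Q :: "'a :: semilattice_inf \<Rightarrow> bool"
  assumes "Q d" and "finite {y. Q y \<and> y \<le> d}"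
    and inf_closed: "\<And>x y. Q x \<Longrightarrow> Q y \<Longrightarrow> Q (inf x y)"
  shows "\<exists>!z. Q z \<and> (\<forall>y. Q y \<longrightarrow> z \<le> y)"
proof -
  obtain z where z: "Q z" "z \<le> d" and minimal: "\<And>y. Q y \<Longrightarrow> y \<le> d \<Longrightarrow> y \<le> z \<Longrightarrow> z = y"
    using finite_has_minimal[OF assms(2)] assms(1) by auto
  have "z \<le> y" if "Q y" for y
  proof -
    have "z = inf z y"
      using minimal[of "inf z y"] inf_closed[OF z(1) that] z(2) by (simp add: inf.coboundedI1)
    then show ?thesis by (metis inf.cobounded2)
  qed
  then show ?thesis using z(1) by (blast intro: order_antisym)
qed

locale plumbing_graph =
  fixes V :: "'v set" and adj :: "'v \<Rightarrow> 'v \<Rightarrow> bool" and e :: "'v \<Rightarrow> int"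
  assumes finite_V: "finite V"
    and adj_sym: "\<And>u w. adj u w \<Longrightarrow> u \<in> V \<and> w \<in> V \<and> u \<noteq> w \<and> adj w u"
    and connected: "\<And>u w. u \<in> V \<Longrightarrow> w \<in> V \<Longrightarrow> adj\<^sup>*\<^sup>* u w"
    and neg_def: "neg_definite V adj e"
begin

abbreviation F where "F \<equiv> form V adj e"
abbreviation ip where "ip x w \<equiv> form V adj e x (Ev w)"
abbreviation M where "M \<equiv> imat adj e"
abbreviation Z where "Z \<equiv> ZK V adj e"

lemma imat_sym: "M v w = M w v"
  unfolding imat_def using adj_sym by auto

lemma imat_nonneg: "v \<noteq> w \<Longrightarrow> 0 \<le> M v w"
  unfolding imat_def by auto

lemma imat_adj: "adj v w \<Longrightarrow> M v w = 1"
  unfolding imat_def using adj_sym by auto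

lemma ip_eq_sum: "w \<in> V \<Longrightarrow> ip x w = (\<Sum>v\<in>V. x v * M v w)"
  unfolding form_def Ev_def
  by (simp add: finite_V if_distrib[of "\<lambda>c. x _ * c * M _ _"] cong: if_cong)

lemma form_eq_sum_ip: "F x y = (\<Sum>w\<in>V. y w * ip x w)"
proof -
  have "F x y = (\<Sum>w\<in>V. \<Sum>v\<in>V. y w * (x v * M v w))"
    unfolding form_def by (subst sum.swap) (simp add: algebra_simps)
  then show ?thesis by (simp add: ip_eq_sum sum_distrib_left)
qed

lemma form_sym: "F x y = F y x"
  unfolding form_def by (subst sum.swap) (simp add: algebra_simps imat_sym)

lemma form_add_left: "F (x + y) z = F x z + F y z"
  unfolding form_def by (simp add: algebra_simps sum.distrib)

lemma form_diff_left: "F (x - y) z = F x z - F y z"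
  unfolding form_def by (simp add: algebra_simps sum_subtractf)

lemma form_uminus_left: "F (- x) z = - F x z"
  unfolding form_def by (simp add: sum_negf)

lemma form_add_right: "F z (x + y) = F z x + F z y"
  using form_add_left form_sym by metis

lemma form_diff_right: "F z (x - y) = F z x - F z y"
  using form_diff_left form_sym by metis

lemma form_uminus_right: "F z (- x) = - F z x"
  using form_uminus_left form_sym by metis

lemma form_sum_left: "F (\<lambda>w. \<Sum>v\<in>A. c v * f v w) z = (\<Sum>v\<in>A. c v * F (f v) z)"
  unfolding form_def by (simp add: sum_distrib_left sum_distrib_right algebra_simps sum.swap[of _ A])

lemma form_eq_0_if_no_edges:
  assumes "\<And>v w. x v \<noteq> 0 \<Longrightarrow> y w \<noteq> 0 \<Longrightarrow> v \<noteq> w \<and> \<not> adj v w"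
  shows "F x y = 0"
  unfolding form_def imat_def using assms by (intro sum.neutral ballI) auto

lemma term_nonneg_outside_supp:
  assumes "0 \<le> x" "x v = 0"
  shows "0 \<le> x u * M u v"
  using assms imat_nonneg[of u v] by (cases "u = v") (auto simp: le_fun_def)

lemma ip_nonneg_outside_supp:
  assumes "0 \<le> x" "x v = 0" "v \<in> V"
  shows "0 \<le> ip x v"
  unfolding ip_eq_sum[OF assms(3)] using term_nonneg_outside_supp[OF assms(1,2)] by (rule sum_nonneg)

lemma ip_ge_adj:
  assumes "0 \<le> x" "x v = 0" "adj w v"
  shows "x w \<le> ip x v"
proof -
  have V: "v \<in> V" "w \<in> V" using adj_sym[OF assms(3)] by auto
  have "x w * M w v \<le> (\<Sum>u\<in>V. x u * M u v)"
    using V(2) finite_V term_nonneg_outside_supp[OF assms(1,2)] by (intro member_le_sum)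
  then show ?thesis using ip_eq_sum[OF V(1)] imat_adj[OF assms(3)] by simp
qed

lemma ip_mono:
  assumes "x \<le> y" "x v = y v" "v \<in> V"
  shows "ip x v \<le> ip y v"
proof -
  have "x u * M u v \<le> y u * M u v" for u
    using assms(1,2) imat_nonneg[of u v] by (cases "u = v") (auto simp: le_fun_def mult_right_mono)
  then show ?thesis unfolding ip_eq_sum[OF assms(3)] by (rule sum_mono)
qed

lemma ip_inf_le: "v \<in> V \<Longrightarrow> ip (inf x y) v \<le> max (ip x v) (ip y v)"
  using ip_mono[of "inf x y" x v] ip_mono[of "inf x y" y v]
  by (cases "x v \<le> y v") (auto simp: inf_min min_def)

lemma form_nonneg_imp_zero: "supported V x \<Longrightarrow> 0 \<le> F x x \<Longrightarrow> x = 0"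
  using neg_def unfolding neg_definite_def by force

lemma solution_exists: "\<exists>x. supported V x \<and> (\<forall>w\<in>V. ip x w = b w)"
proof -
  have "\<exists>x. (\<forall>v. v \<notin> V \<longrightarrow> x v = 0) \<and> (\<forall>w\<in>V. (\<Sum>v\<in>V. x v * M v w) = b w)"
  proof (rule linear_system_solvable_if_kernel_trivial[OF finite_V])
    fix x :: "'v \<Rightarrow> rat"
    assume "\<forall>v. v \<notin> V \<longrightarrow> x v = 0" "\<forall>w\<in>V. (\<Sum>v\<in>V. x v * M v w) = 0"
    then have "supported V x" "F x x = 0"
      unfolding supported_def form_eq_sum_ip[of x x] by (simp_all add: ip_eq_sum)
    then show "x = 0" using form_nonneg_imp_zero by simp
  qed
  then show ?thesis using ip_eq_sum unfolding supported_def by auto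
qed

lemma solution_unique:
  assumes "supported V x" "supported V y" "\<forall>w\<in>V. ip x w = ip y w"
  shows "x = y"
proof -
  have "supported V (x - y)" using assms(1,2) unfolding supported_def by auto
  moreover have "F (x - y) (x - y) = 0"
    using assms(3) unfolding form_eq_sum_ip[of "x - y" "x - y"] by (simp add: form_diff_left)
  ultimately show ?thesis using form_nonneg_imp_zero by fastforce
qed

lemma solution_ex1: "\<exists>!x. supported V x \<and> (\<forall>w\<in>V. ip x w = b w)"
  using solution_exists solution_unique by metis

lemma ZK_spec: "supported V Z" "v \<in> V \<Longrightarrow> ip Z v = of_int (e v) + 2"
  using theI'[OF solution_ex1, of "\<lambda>v. of_int (e v) + 2"] unfolding ZK_def[symmetric] by auto

lemma Estar_spec: "w \<in> V \<Longrightarrow> ip (Estar V adj e v) w = (if v = w then -1 else 0)"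
  using theI'[OF solution_ex1, of "\<lambda>w. if v = w then -1 else 0"] unfolding Estar_def[symmetric] by auto

text \<open>With \<open>y = y\<^sub>+ - y\<^sub>-\<close>, one has \<open>(y\<^sub>-, y\<^sub>-) = (y\<^sub>-, y\<^sub>+) - (y\<^sub>-, y) \<ge> 0\<close>, so \<open>y\<^sub>- = 0\<close> by negative
  definiteness.\<close>

lemma nonneg_if_antinef:
  assumes "B \<subseteq> V" "supported B y" "\<forall>u\<in>B. ip y u \<le> 0"
  shows "0 \<le> y"
proof -
  define yp where "yp = (\<lambda>v. max (y v) 0)"
  define yn where "yn = (\<lambda>v. max (- y v) 0)"
  have y: "y = yp - yn" unfolding yn_def yp_def by (auto simp: fun_eq_iff max_def)
  have "0 \<le> yn w * ip yp w - yn w * ip y w" if "w \<in> V" for w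
  proof (cases "yn w = 0")
    case False
    then have "yp w = 0" "w \<in> B" using assms(2) unfolding yp_def yn_def supported_def by auto
    then have "0 \<le> ip yp w" "ip y w \<le> 0"
      using ip_nonneg_outside_supp[of yp w] that assms(3) unfolding yp_def le_fun_def by auto
    moreover have "0 \<le> yn w" unfolding yn_def by simp
    ultimately show ?thesis
      using mult_nonneg_nonneg[of "yn w" "ip yp w"] mult_nonneg_nonpos[of "yn w" "ip y w"] by linarith
  qed simp
  then have "0 \<le> F yn yn"
    unfolding form_eq_sum_ip[of yn yn] by (intro sum_nonneg) (simp add: y form_diff_left algebra_simps)
  moreover have "supported V yn" using assms(1,2) unfolding supported_def yn_def by auto
  ultimately have "yn = 0" using form_nonneg_imp_zero by blast
  then show "0 \<le> y" unfolding yn_def by (auto simp: le_fun_def fun_eq_iff max_def split: if_splits)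
qed

definition connected_on :: "'v set \<Rightarrow> bool" where
  "connected_on B \<longleftrightarrow> (\<forall>S. S \<subseteq> B \<and> S \<noteq> {} \<and> S \<noteq> B \<longrightarrow> (\<exists>u\<in>S. \<exists>w\<in>B - S. adj u w))"

lemma connected_on_V: "connected_on V"
  unfolding connected_on_def
proof (intro allI impI)
  fix S assume S: "S \<subseteq> V \<and> S \<noteq> {} \<and> S \<noteq> V"
  then obtain a b where ab: "a \<in> S" "b \<in> V" "b \<notin> S" by auto
  have "adj\<^sup>*\<^sup>* a b" using connected ab S by auto
  then show "\<exists>u\<in>S. \<exists>w\<in>V - S. adj u w" using ab(3)
  proof (induction rule: rtranclp_induct)
    case (step y z)
    then show ?case by (cases "y \<in> S") (use adj_sym[OF step(2)] in blast)+
  qed (use ab in simp)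
qed

lemma pos_if_antinef_on_connected:
  assumes B: "B \<subseteq> V" "connected_on B"
    and y: "supported B y" "y \<noteq> 0" "\<forall>u\<in>B. ip y u \<le> 0" and u: "u \<in> B"
  shows "0 < y u"
proof (rule ccontr)
  assume "\<not> 0 < y u"
  have y0: "0 \<le> y" using nonneg_if_antinef[OF B(1) y(1,3)] .
  define S where "S = {v \<in> B. 0 < y v}"
  obtain a where "y a \<noteq> 0" using y(2) by (auto simp: fun_eq_iff)
  then have "a \<in> S" using y0 y(1) unfolding S_def supported_def le_fun_def by (auto simp: less_le)
  moreover have "u \<notin> S" using \<open>\<not> 0 < y u\<close> unfolding S_def by auto
  ultimately have "S \<subseteq> B \<and> S \<noteq> {} \<and> S \<noteq> B" using u unfolding S_def by blast
  then obtain v w where vw: "v \<in> S" "w \<in> B - S" "adj v w"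
    using B(2) unfolding connected_on_def by meson
  have "y w = 0" using vw(2) y0 unfolding S_def le_fun_def by (auto simp: less_le)
  then have "0 < ip y w" using ip_ge_adj[OF y0 _ vw(3)] vw(1) unfolding S_def by fastforce
  then show False using y(3) vw(2) by force
qed

abbreviation chi' where "chi' \<equiv> chi V adj e"

lemma chi_add: "chi' (a + b) = chi' a + chi' b - F a b"
  unfolding chi_def
  by (simp add: form_add_left form_add_right form_diff_right form_sym[of b a] field_simps)

lemma chi_Ev:
  assumes v: "v \<in> V"
  shows "chi' (Ev v) = 1"
proof -
  have "F (Ev v) (Ev v) = (\<Sum>u\<in>V. if u = v then M v v else 0)"
    unfolding ip_eq_sum[OF v] by (intro sum.cong) (auto simp: Ev_def)
  also have "\<dots> = of_int (e v)" using v finite_V by (simp add: imat_def)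
  finally have "F (Ev v) (Ev v) = of_int (e v)" .
  moreover have "F (Ev v) Z = of_int (e v) + 2" using form_sym[of "Ev v" Z] ZK_spec(2)[OF v] by simp
  ultimately show ?thesis unfolding chi_def by (simp add: form_diff_right)
qed

lemma chi_complement: "chi' (Z - C) = (\<Sum>w\<in>V. (Z - C) w * ip C w) / 2"
proof -
  have "Z - C - Z = - C" by (simp add: fun_eq_iff)
  then have "chi' (Z - C) = F C (Z - C) / 2"
    unfolding chi_def by (simp add: form_uminus_right form_sym[of "Z - C" C])
  then show ?thesis unfolding form_eq_sum_ip[of C "Z - C"] .
qed

lemma latL_add: "a \<in> latL B \<Longrightarrow> b \<in> latL B \<Longrightarrow> a + b \<in> latL B"
  unfolding latL_def supported_def by auto

lemma latL_diff: "a \<in> latL B \<Longrightarrow> b \<in> latL B \<Longrightarrow> a - b \<in> latL B"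
  unfolding latL_def supported_def by auto

lemma Ev_in_latL: "v \<in> B \<Longrightarrow> Ev v \<in> latL B"
  unfolding latL_def supported_def Ev_def by auto

lemma Zmin_least:
  assumes B: "B \<subseteq> V" "connected_on B" and D: "D \<in> latL B" "D \<noteq> 0" "\<forall>v\<in>B. ip D v \<le> 0"
  shows "Zmin V adj e B \<in> latL B \<and> (\<forall>v\<in>B. ip (Zmin V adj e B) v \<le> 0) \<and> Zmin V adj e B \<le> D"
proof -
  define Q where "Q y \<longleftrightarrow> y \<in> latL B \<and> y \<noteq> 0 \<and> (\<forall>v\<in>B. ip y v \<le> 0)" for y
  have nonneg: "0 \<le> y" if "Q y" for y
    using nonneg_if_antinef[OF B(1)] that unfolding Q_def latL_def by auto
  obtain b where b: "b \<in> B" using D(1,2) unfolding latL_def supported_def by (auto simp: fun_eq_iff)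
  have "{y. Q y \<and> y \<le> D} \<subseteq> {y. supported V y \<and> (\<forall>v. y v - 0 v \<in> \<int>) \<and> 0 \<le> y \<and> y \<le> D}"
    using nonneg B(1) unfolding Q_def latL_def supported_def by auto
  then have "finite {y. Q y \<and> y \<le> D}"
    using finite_shifted_integral_box[OF finite_V] by (rule finite_subset)
  moreover have "Q (inf x y)" if Q: "Q x" "Q y" for x y
  proof -
    have "inf x y \<in> latL B" using Q unfolding Q_def latL_def supported_def by (auto simp: inf_min min_def)
    moreover have "0 < inf x y b" \<comment> \<open>connectivity of \<open>B\<close> keeps the infimum nonzero\<close>
      using pos_if_antinef_on_connected[OF B _ _ _ b] Q unfolding Q_def latL_def by (simp add: inf_min)
    moreover have "ip (inf x y) v \<le> 0" if "v \<in> B" for v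
      using ip_inf_le[of v x y] Q that B(1) unfolding Q_def by fastforce
    ultimately show ?thesis unfolding Q_def by (metis less_irrefl zero_fun_def)
  qed
  ultimately have "\<exists>!z. Q z \<and> (\<forall>y. Q y \<longrightarrow> z \<le> y)"
    using least_element_if_inf_closed[of Q D] D unfolding Q_def by blast
  then have "Q (Zmin V adj e B) \<and> (\<forall>y. Q y \<longrightarrow> Zmin V adj e B \<le> y)"
    unfolding Zmin_def Q_def conj_assoc by (rule theI')
  then show ?thesis using D unfolding Q_def by blast
qed

lemma latL_subset_latLdual: "latL V \<subseteq> latLdual V adj e"
  unfolding latLdual_def latL_def form_def imat_def by (auto intro!: Ints_sum Ints_mult)

lemma ZK_in_latLdual: "Z \<in> latLdual V adj e"
proof -
  have "F Z l = (\<Sum>w\<in>V. l w * (of_int (e w) + 2))" for l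
    unfolding form_eq_sum_ip[of Z l] by (simp add: ZK_spec(2))
  then show ?thesis
    unfolding latLdual_def latL_def using ZK_spec(1) by (auto intro!: Ints_sum Ints_mult Ints_add)
qed

lemma latLdual_add: "x \<in> latLdual V adj e \<Longrightarrow> y \<in> latLdual V adj e \<Longrightarrow> x + y \<in> latLdual V adj e"
  unfolding latLdual_def supported_def by (auto simp: form_add_left)

text \<open>The invariant satisfied by every \<open>C = C\<^sub>j\<close> with \<open>j < m\<close>; there \<open>supp V (Z - C)\<close> is \<open>B\<^sub>j\<^sub>+\<^sub>1\<close>.\<close>

definition nn_admissible :: "('v \<Rightarrow> rat) \<Rightarrow> bool" where
  "nn_admissible C \<longleftrightarrow> Z - C \<in> latL V \<and> 0 \<le> Z - C \<and> (\<forall>u\<in>supp V (Z - C). ip C u = 0)"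

lemma antinef_if_zcoef_nonzero:
  assumes "zcoef V adj e x \<noteq> 0" and w: "w \<in> V"
  shows "ip x w \<le> 0"
proof -
  obtain n :: "'v \<Rightarrow> nat" where n: "x = (\<lambda>w. \<Sum>v\<in>V. of_nat (n v) * Estar V adj e v w)"
    using assms(1) unfolding zcoef_def by (rule sum.not_neutral_contains_not_neutral) auto
  have "ip x w = (\<Sum>v\<in>V. of_nat (n v) * ip (Estar V adj e v) w)"
    unfolding n by (rule form_sum_left)
  also have "\<dots> = (\<Sum>v\<in>V. if v = w then - of_nat (n w) else 0)"
    using Estar_spec[OF w] by (intro sum.cong) auto
  also have "\<dots> = - of_nat (n w)" using w finite_V by simp
  finally show ?thesis by simp
qed

lemma not_adj_if_multiplicity_nonzero:
  assumes C: "nn_admissible C" and B: "B = supp V (Z - C)"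
    and mm: "\<forall>u \<in> V - B. 0 \<le> mm u"
    and antinef: "\<forall>w \<in> V. ip (C + (\<lambda>u. if u \<in> V - B then of_int (mm u) else 0)) w \<le> 0"
    and v: "v \<in> V - B" "mm v \<noteq> 0" and w: "w \<in> B"
  shows "\<not> adj v w"
proof
  assume vw: "adj v w"
  define X where "X = (\<lambda>u. if u \<in> V - B then (of_int (mm u) :: rat) else 0)"
  have "0 \<le> X" "X w = 0" using mm w unfolding X_def le_fun_def by auto
  then have "of_int (mm v) \<le> ip X w" using ip_ge_adj[OF _ _ vw] v(1) unfolding X_def by fastforce
  moreover have "ip C w = 0" using C w unfolding B nn_admissible_def by blast
  moreover have "ip (C + X) w \<le> 0" using antinef w B unfolding X_def supp_def by auto
  ultimately show False using mm v by (force simp: form_add_left)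
qed

end

locale elliptic_graph = plumbing_graph +
  assumes elliptic: "elliptic V adj e"
begin

lemma e_le_minus_two: "v \<in> V \<Longrightarrow> e v \<le> -2"
  using elliptic unfolding elliptic_def by auto

lemma chi_nonneg: "l \<in> latL V \<Longrightarrow> 0 \<le> l \<Longrightarrow> l \<noteq> 0 \<Longrightarrow> 0 \<le> chi' l"
  using elliptic unfolding elliptic_def by (auto simp: less_le)

lemma form_pos_if_adjacent_supports:
  assumes x: "0 \<le> x" and y: "0 \<le> y" and disjoint: "\<forall>u. x u = 0 \<or> y u = 0"
    and wv: "adj w v" "x w \<noteq> 0" "y v \<noteq> 0"
  shows "0 < F x y"
proof -
  have V: "v \<in> V" using adj_sym[OF wv(1)] by auto
  have terms: "0 \<le> y u * ip x u" if "u \<in> V" for u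
  proof (cases "y u = 0")
    case False
    then have "0 \<le> ip x u" using disjoint ip_nonneg_outside_supp[OF x _ that] by metis
    then show ?thesis using y by (simp add: le_fun_def)
  qed simp
  have "0 < x w" "0 < y v" using x y wv(2,3) unfolding le_fun_def by (auto simp: less_le)
  moreover have "x w \<le> ip x v" using ip_ge_adj[OF x _ wv(1)] disjoint wv(3) by metis
  ultimately have "0 < y v * ip x v" by simp
  also have "\<dots> \<le> (\<Sum>u\<in>V. y u * ip x u)" using finite_V V terms by (intro member_le_sum) auto
  finally show ?thesis unfolding form_eq_sum_ip[of x y] .
qed

text \<open>If the supports of \<open>l\<^sub>1\<close> and \<open>l\<^sub>2\<close> touch, then \<open>(l\<^sub>1, l\<^sub>2) > 0\<close> and \<open>\<chi>(l\<^sub>1 + l\<^sub>2) < 0\<close>. Otherwise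
  \<open>l\<^sub>1\<close> can be enlarged by a neighbouring \<open>E\<^sub>v\<close> outside both supports: as \<open>(l\<^sub>1, E\<^sub>v) \<ge> 1\<close>, this does
  not increase \<open>\<chi>\<close>.\<close>

lemma no_disjoint_nonpos_cycles:
  assumes l2: "l2 \<in> latL V" "0 \<le> l2" "l2 \<noteq> 0" "chi' l2 \<le> 0"
    and l1: "l1 \<in> latL V" "0 \<le> l1" "l1 \<noteq> 0" "chi' l1 \<le> 0"
    and disjoint: "\<forall>v. l1 v = 0 \<or> l2 v = 0"
  shows False
  using l1 disjoint
proof (induction "card (V - supp V l1)" arbitrary: l1 rule: less_induct)
  case less
  show False
  proof (cases "\<exists>w v. adj w v \<and> l1 w \<noteq> 0 \<and> l2 v \<noteq> 0")
    case True
    then have "0 < F l1 l2" using form_pos_if_adjacent_supports less.prems(2,5) l2(2) by blast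
    moreover have "0 \<le> chi' (l1 + l2)"
      using chi_nonneg latL_add[OF less.prems(1) l2(1)] less.prems(2,3) l2(2)
      by (metis add_nonneg_nonneg add_nonneg_eq_0_iff)
    ultimately show False using chi_add[of l1 l2] less.prems(4) l2(4) by simp
  next
    case False
    have "supp V l1 \<subseteq> V" "supp V l1 \<noteq> {}" "supp V l1 \<noteq> V"
      using less.prems(1,3,5) l2(1,3) unfolding supp_def latL_def supported_def by (auto simp: fun_eq_iff)
    then obtain w v where wv: "w \<in> supp V l1" "v \<in> V - supp V l1" "adj w v"
      using connected_on_V unfolding connected_on_def by meson
    have l1v: "l1 v = 0" and l2v: "l2 v = 0" using wv False unfolding supp_def by auto
    have "0 < l1 w" using less.prems(2) wv(1) unfolding supp_def le_fun_def by (auto simp: less_le)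
    moreover have "l1 w \<in> \<int>" using less.prems(1) unfolding latL_def by auto
    ultimately have "1 \<le> l1 w" by (elim Ints_cases) simp
    then have "1 \<le> F l1 (Ev v)" using ip_ge_adj[OF less.prems(2) l1v wv(3)] by simp
    then have chi: "chi' (l1 + Ev v) \<le> 0" using chi_add[of l1 "Ev v"] chi_Ev less.prems(4) wv(2) by simp
    have supp: "supp V (l1 + Ev v) = insert v (supp V l1)"
    proof (rule Set.set_eqI)
      show "u \<in> supp V (l1 + Ev v) \<longleftrightarrow> u \<in> insert v (supp V l1)" for u
        using wv(2) l1v by (cases "u = v") (simp_all add: supp_def Ev_def)
    qed
    have "V - supp V (l1 + Ev v) = (V - supp V l1) - {v}" unfolding supp by blast
    then have "card (V - supp V (l1 + Ev v)) < card (V - supp V l1)"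
      using wv(2) finite_V by (metis card_Diff1_less finite_Diff)
    moreover have "l1 + Ev v \<in> latL V" using latL_add[OF less.prems(1) Ev_in_latL] wv(2) by blast
    moreover have "0 \<le> l1 + Ev v" "l1 + Ev v \<noteq> 0"
      using less.prems(2) l1v by (auto simp: le_fun_def Ev_def fun_eq_iff intro!: exI[of _ v])
    moreover have "\<forall>u. (l1 + Ev v) u = 0 \<or> l2 u = 0" using less.prems(5) l2v by (simp add: Ev_def)
    ultimately show False using less.hyps chi by blast
  qed
qed

lemma connected_on_supp_if_chi_nonpos:
  assumes D: "D \<in> latL V" "0 \<le> D" "chi' D \<le> 0"
  shows "connected_on (supp V D)"
  unfolding connected_on_def
proof (intro allI impI, rule ccontr)
  fix S assume S: "S \<subseteq> supp V D \<and> S \<noteq> {} \<and> S \<noteq> supp V D"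
    and no_edge: "\<not> (\<exists>u\<in>S. \<exists>w\<in>supp V D - S. adj u w)"
  define D1 where "D1 = (\<lambda>v. if v \<in> S then D v else 0)"
  define D2 where "D2 = D - D1"
  have L: "D1 \<in> latL V" "D2 \<in> latL V"
    using D(1) S latL_diff[OF D(1)] unfolding D2_def D1_def latL_def supported_def supp_def by auto
  have P: "0 \<le> D1" "0 \<le> D2" using D(2) unfolding D2_def D1_def le_fun_def by auto
  have N: "D1 \<noteq> 0" "D2 \<noteq> 0" using S unfolding D2_def D1_def supp_def by (auto simp: fun_eq_iff)
  have "F D1 D2 = 0"
    using no_edge S unfolding D1_def D2_def supp_def
    by (intro form_eq_0_if_no_edges) (auto split: if_splits dest: adj_sym)
  then have "chi' D = chi' D1 + chi' D2" using chi_add[of D1 D2] unfolding D2_def by simp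
  then have "chi' D1 \<le> 0" "chi' D2 \<le> 0"
    using chi_nonneg[OF L(1) P(1) N(1)] chi_nonneg[OF L(2) P(2) N(2)] D(3) by linarith+
  moreover have "\<forall>v. D1 v = 0 \<or> D2 v = 0" unfolding D2_def D1_def by auto
  ultimately show False using no_disjoint_nonpos_cycles L P N by blast
qed

lemma s_cls_ZK:
  "s_cls V adj e Z - Z \<in> latL V \<and> (\<forall>v\<in>V. ip (s_cls V adj e Z) v \<le> 0) \<and> s_cls V adj e Z \<le> Z"
proof -
  define Q where "Q y \<longleftrightarrow> y \<in> Sdual V adj e \<and> y - Z \<in> latL V" for y
  have Q_iff: "Q y \<longleftrightarrow> y - Z \<in> latL V \<and> (\<forall>v\<in>V. ip y v \<le> 0)" for y
  proof -
    have "y = Z + (y - Z)" by simp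
    then have "y - Z \<in> latL V \<Longrightarrow> y \<in> latLdual V adj e"
      using latLdual_add[OF ZK_in_latLdual] latL_subset_latLdual by (metis subsetD)
    then show ?thesis unfolding Q_def Sdual_def by auto
  qed
  have supported: "supported V y" if "Q y" for y
    using that unfolding Q_def Sdual_def latLdual_def by auto
  have nonneg: "0 \<le> y" if "Q y" for y
    using nonneg_if_antinef[OF subset_refl supported[OF that]] that unfolding Q_iff by auto
  let ?least = "\<lambda>z. Q z \<and> (\<forall>y. Q y \<longrightarrow> z \<le> y)"
  have "Q Z" unfolding Q_iff using ZK_spec(2) e_le_minus_two by (force simp: latL_def supported_def)
  have "{y. Q y \<and> y \<le> Z} \<subseteq> {y. supported V y \<and> (\<forall>v. y v - Z v \<in> \<int>) \<and> 0 \<le> y \<and> y \<le> Z}"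
    using supported nonneg unfolding Q_iff latL_def by auto
  then have "finite {y. Q y \<and> y \<le> Z}"
    using finite_shifted_integral_box[OF finite_V] by (rule finite_subset)
  moreover have "Q (inf x y)" if Q: "Q x" "Q y" for x y
  proof -
    have "inf x y - Z = inf (x - Z) (y - Z)" by (auto simp: fun_eq_iff inf_min min_def)
    moreover have "inf (x - Z) (y - Z) \<in> latL V"
      using Q unfolding Q_iff latL_def supported_def by (auto simp: inf_min min_def)
    moreover have "ip (inf x y) v \<le> 0" if "v \<in> V" for v
      using ip_inf_le[OF that, of x y] Q that unfolding Q_iff by fastforce
    ultimately show ?thesis unfolding Q_iff by auto
  qed
  ultimately have "\<exists>!z. ?least z" using least_element_if_inf_closed[of Q Z] \<open>Q Z\<close> by blast
  then have "?least (THE z. ?least z)" by (rule theI')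
  moreover have "s_cls V adj e Z = (THE z. ?least z)"
    unfolding s_cls_def Q_def by (rule arg_cong[where f = The]) (auto simp: fun_eq_iff)
  ultimately have "?least (s_cls V adj e Z)" by simp
  then show ?thesis using \<open>Q Z\<close> unfolding Q_iff by blast
qed

lemma nn_admissible_if_antinef_on_supp:
  assumes D: "Z - C \<in> latL V" "0 \<le> Z - C" and antinef: "\<forall>u\<in>supp V (Z - C). ip C u \<le> 0"
  shows "nn_admissible C"
proof -
  have terms: "(Z - C) w * ip C w \<le> 0" if "w \<in> V" for w
    using antinef D(2) that unfolding supp_def le_fun_def
    by (cases "(Z - C) w = 0") (auto simp: mult_nonneg_nonpos)
  have "(\<Sum>w\<in>V. (Z - C) w * ip C w) = 0"
  proof (cases "Z - C = 0")
    case False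
    then have "0 \<le> chi' (Z - C)" using chi_nonneg D by blast
    moreover have "(\<Sum>w\<in>V. (Z - C) w * ip C w) \<le> 0" using terms by (rule sum_nonpos)
    ultimately show ?thesis using chi_complement[of C] by linarith
  qed simp
  then have "(Z - C) u * ip C u = 0" if "u \<in> V" for u
    using sum_nonneg_eq_0_iff[OF finite_V, of "\<lambda>w. - ((Z - C) w * ip C w)"] terms that
    by (simp add: sum_negf)
  then show ?thesis using D unfolding nn_admissible_def supp_def by auto
qed

lemma nn_admissible_s_cls: "nn_admissible (s_cls V adj e Z)"
proof (rule nn_admissible_if_antinef_on_supp)
  let ?s = "s_cls V adj e Z"
  show "Z - ?s \<in> latL V"
    using s_cls_ZK unfolding latL_def supported_def by auto (metis Ints_minus minus_diff_eq)
  show "0 \<le> Z - ?s" using s_cls_ZK by (simp add: le_fun_def)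
  show "\<forall>u\<in>supp V (Z - ?s). ip ?s u \<le> 0" using s_cls_ZK unfolding supp_def by auto
qed

lemma nn_admissible_step:
  assumes C: "nn_admissible C" and ne: "C \<noteq> Z"
  shows "nn_admissible (C + Zmin V adj e (supp V (Z - C)))"
proof -
  define B where "B = supp V (Z - C)"
  define Zm where "Zm = Zmin V adj e B"
  have D: "Z - C \<in> latL V" "0 \<le> Z - C" and orth: "\<forall>u\<in>B. ip C u = 0"
    using C unfolding nn_admissible_def B_def by auto
  have BV: "B \<subseteq> V" unfolding B_def supp_def by auto
  have "(Z - C) w * ip C w = 0" if "w \<in> V" for w
    using orth that unfolding B_def supp_def by (cases "(Z - C) w = 0") auto
  then have "(\<Sum>w\<in>V. (Z - C) w * ip C w) = 0" by (intro sum.neutral) blast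
  then have "chi' (Z - C) = 0" unfolding chi_complement by simp
  then have "connected_on B" unfolding B_def using connected_on_supp_if_chi_nonpos D by simp
  moreover have "Z - C \<in> latL B" using D(1) unfolding B_def latL_def supported_def supp_def by auto
  moreover have "Z - C \<noteq> 0" using ne by simp
  moreover have "\<forall>v\<in>B. ip (Z - C) v \<le> 0"
    using ZK_spec(2) e_le_minus_two orth BV by (force simp: form_diff_left)
  ultimately have Zm: "Zm \<in> latL B" "\<forall>v\<in>B. ip Zm v \<le> 0" "Zm \<le> Z - C"
    using Zmin_least[OF BV] unfolding Zm_def by blast+
  have Zm0: "0 \<le> Zm" using nonneg_if_antinef[OF BV] Zm(1,2) unfolding latL_def by auto
  have R: "Z - (C + Zm) = (Z - C) - Zm" by simp
  show ?thesis unfolding B_def[symmetric] Zm_def[symmetric]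
  proof (rule nn_admissible_if_antinef_on_supp)
    have "Zm \<in> latL V" using Zm(1) BV unfolding latL_def supported_def by auto
    then show "Z - (C + Zm) \<in> latL V" unfolding R by (rule latL_diff[OF D(1)])
    show "0 \<le> Z - (C + Zm)" using Zm(3) unfolding R le_fun_def by auto
    have "supp V (Z - (C + Zm)) \<subseteq> B"
      using Zm(3) Zm0 unfolding R B_def supp_def le_fun_def by (auto intro: order_antisym)
    then show "\<forall>u\<in>supp V (Z - (C + Zm)). ip (C + Zm) u \<le> 0"
      using orth Zm(2) by (auto simp: form_add_left)
  qed
qed

lemma nn_admissible_nnC:
  assumes "\<forall>i. -1 \<le> i \<and> i < m \<longrightarrow> NN_C V adj e i \<noteq> Z"
  shows "int k \<le> m \<Longrightarrow> nn_admissible (nnC V adj e k)"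
proof (induction k)
  case 0
  show ?case using nn_admissible_s_cls by simp
next
  case (Suc k)
  have "NN_C V adj e (int k - 1) \<noteq> Z" using assms Suc.prems by auto
  then have "nnC V adj e k \<noteq> Z" unfolding NN_C_def by simp
  moreover have "nn_admissible (nnC V adj e k)" using Suc by simp
  ultimately show ?case unfolding nnC.simps using nn_admissible_step by blast
qed

end

theorem mainTheorem9:
  fixes V :: "'v set" and adj :: "'v \<Rightarrow> 'v \<Rightarrow> bool" and e :: "'v \<Rightarrow> int"
    and m j :: int and l :: "'v \<Rightarrow> rat" and mm :: "'v \<Rightarrow> int"
  assumes tree: "is_tree V adj"
    and negdef: "neg_definite V adj e"
    and ell: "elliptic V adj e"
    and m_ge: "m \<ge> -1"
    and m_def: "NN_C V adj e m = ZK V adj e"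
    and m_first: "\<forall>i. -1 \<le> i \<and> i < m \<longrightarrow> NN_C V adj e i \<noteq> ZK V adj e"
    and j_range: "-1 \<le> j" "j \<le> m - 1"
    and l_in: "l \<in> SuppP0_j V adj e j"
    and mm_nonneg: "\<forall>v \<in> V - NN_B V adj e (j + 1). mm v \<ge> 0"
    and decomp: "ZK V adj e - Eall V - l =
       NN_C V adj e j + (\<lambda>w. if w \<in> V - NN_B V adj e (j + 1) then of_int (mm w) else 0)"
  shows "\<forall>v \<in> V - NN_B V adj e (j + 1). mm v \<noteq> 0 \<longrightarrow>
           (\<forall>w \<in> NN_B V adj e (j + 1). \<not> adj v w)"
proof -
  interpret elliptic_graph V adj e
    using tree negdef ell unfolding is_tree_def by unfold_locales auto
  define k where "k = nat (j + 1)"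
  have C: "NN_C V adj e j = nnC V adj e k" unfolding NN_C_def k_def ..
  have B: "NN_B V adj e (j + 1) = supp V (Z - nnC V adj e k)"
    unfolding NN_B_def using j_range C by simp
  have "nn_admissible (nnC V adj e k)"
    using nn_admissible_nnC[OF m_first] j_range unfolding k_def by simp
  moreover have "\<forall>w\<in>V. ip (Z - Eall V - l) w \<le> 0"
    using l_in antinef_if_zcoef_nonzero unfolding SuppP0_j_def SuppP0_def wcoef_def by auto
  ultimately show ?thesis
    using not_adj_if_multiplicity_nonzero[OF _ B] mm_nonneg decomp unfolding C by auto
qed

end
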